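(* If $G$ is a countable group, then the number of ends of $G$ is either infinite or at most $2$.
   Context: For a countable group $G$ equipped with a proper left-invariant metric (balls finite, $d(gh_1,gh_2)=d(h_1,h_2)$; any two such metrics are coarsely equivalent via the identity), the number of ends of $G$ is the cardinality of $CF(G)\setminus G$, where for a proper metric space $X$, $CF(X)$ is the compactification induced by all continuous glacially oscillating functions $X\to[0,1]$. A glacial scale on $X$ is a sequence $\mathcal S=\{(K_i,n_i)\}_{i\ge1}$, $K_i$ bounded, $n_i\in\mathbb N$, such that for every bounded $K$ and $r>0$ there is $i$ with $K\subset K_i$, $n_i>r$; an $\mathcal S$-chain is a finite sequence $x_1,\dots,x_n$ with, for each $i\le n-1$, some $m$ with $x_i,x_{i+1}\notin K_m$ and $d(x_i,x_{i+1})\le n_m$; $f$ is glacially oscillating if for every $\epsilon>0$ there is a glacial scale $\mathcal S$ with $|f(x_1)-f(x_n)|<\epsilon$ for all $\mathcal S$-chains. Equivalently, the number of ends of an infinite $G$ is the supremum of $n$ such that $G$ contains $n$ pairwise disjoint infinite almost invariant subsets ($A$ is almost invariant if $A\,\Delta\,(A g)$ is finite for all $g\in G$). *)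

theory Defs
  imports "HOL-Algebra.Coset" "HOL-Library.Extended_Nat"
begin

definition almost_invariant :: "('a, 'b) monoid_scheme \<Rightarrow> 'a set \<Rightarrow> bool" where
  "almost_invariant G A \<longleftrightarrow> A \<subseteq> carrier G \<and>
     (\<forall>g \<in> carrier G. finite ((A - (A #>\<^bsub>G\<^esub> g)) \<union> ((A #>\<^bsub>G\<^esub> g) - A)))"

definition num_ends :: "('a, 'b) monoid_scheme \<Rightarrow> enat" where
  "num_ends G = (if finite (carrier G) then 0 else
     Sup {enat n | n. \<exists>A :: nat \<Rightarrow> 'a set.
        (\<forall>i<n. almost_invariant G (A i) \<and> infinite (A i)) \<and>
        (\<forall>i<n. \<forall>j<n. i \<noteq> j \<longrightarrow> A i \<inter> A j = {})})"

end

theory Submission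
  imports Defs "HOL-Library.Countable_Set"
begin

text \<open>Fix a proper length function on \<open>G\<close> (countability provides one) and a maximal family
  of disjoint infinite almost invariant sets \<open>A 0, \<dots>, A (N - 1)\<close>; by maximality, every almost
  invariant subset of some \<open>A i\<close> is finite or cofinite in it.  Choose a scale \<open>rho\<close> growing so
  slowly that at length \<open>t\<close> right multiplication by elements of length at most \<open>rho t\<close> never
  crosses the boundary of an \<open>A i\<close>, and join \<open>x\<close> and \<open>y\<close> when \<open>inv x \<otimes> y\<close> is short compared
  with the lengths of \<open>x\<close> and \<open>y\<close>.  Unions of components of this graph are almost invariant,
  so every \<open>A i\<close> contains an infinite component.  If \<open>N \<ge> 3\<close>, pick \<open>g \<in> A 0\<close> far from the
  origin and \<open>i \<noteq> j\<close> with \<open>inv g \<notin> A i \<union> A j\<close>: left translation by \<open>g\<close> maps the infinite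
  components in \<open>A i\<close> and \<open>A j\<close> to disjoint almost invariant subsets of \<open>A 0\<close>, both
  cofinite, so \<open>A 0\<close> would be finite.\<close>

definition ends_family :: "('a, 'b) monoid_scheme \<Rightarrow> (nat \<Rightarrow> 'a set) \<Rightarrow> nat \<Rightarrow> bool" where
  "ends_family G A n \<longleftrightarrow>
     (\<forall>i<n. almost_invariant G (A i) \<and> infinite (A i)) \<and>
     (\<forall>i<n. \<forall>j<n. i \<noteq> j \<longrightarrow> A i \<inter> A j = {})"

lemma num_ends_eq_Sup_ends_family:
  "infinite (carrier G) \<Longrightarrow> num_ends G = Sup {enat n | n. \<exists>A. ends_family G A n}"
  unfolding num_ends_def ends_family_def by simp

lemma num_ends_attained:
  assumes "infinite (carrier G)" and "num_ends G = enat m"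
  shows "\<exists>A. ends_family G A m" and "\<not> ends_family G B (Suc m)"
proof -
  define S where "S = {enat n | n. \<exists>A. ends_family G A n}"
  have Sup_S: "Sup S = enat m"
    using assms unfolding S_def by (simp add: num_ends_eq_Sup_ends_family)
  have "finite S"
    using Sup_S by (auto simp: Sup_enat_def split: if_splits)
  moreover have "enat 0 \<in> S"
    unfolding S_def ends_family_def by auto
  ultimately have "Sup S \<in> S"
    by (auto simp: Sup_enat_def intro: Max_in)
  then show "\<exists>A. ends_family G A m"
    using Sup_S unfolding S_def by auto
  show "\<not> ends_family G B (Suc m)"
  proof
    assume "ends_family G B (Suc m)"
    then have "enat (Suc m) \<le> Sup S"
      unfolding S_def by (intro Sup_upper) blast
    then show False
      using Sup_S by simp
  qed
qed

lemma infinite_split: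
  assumes "infinite S"
  obtains T where "T \<subseteq> S" "infinite T" "infinite (S - T)"
proof -
  obtain f :: "nat \<Rightarrow> _" where f: "inj f" "range f \<subseteq> S"
    using infinite_countable_subset[OF assms] by blast
  have "inj (\<lambda>n. f (2 * n))" "inj (\<lambda>n. f (2 * n + 1))"
    using f(1) by (auto simp: inj_def dest!: injD[OF f(1)])
  then have "infinite (range (\<lambda>n. f (2 * n)))" "infinite (range (\<lambda>n. f (2 * n + 1)))"
    by (auto dest: range_inj_infinite)
  moreover have "f (2 * n + 1) \<noteq> f (2 * m)" for n m
  proof
    assume "f (2 * n + 1) = f (2 * m)"
    then have "2 * n + 1 = 2 * m"
      by (rule injD[OF f(1)])
    then show False
      by presburger
  qed
  then have "range (\<lambda>n. f (2 * n + 1)) \<subseteq> S - range (\<lambda>n. f (2 * n))"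
    using f(2) by auto
  ultimately show ?thesis
    using that[of "range (\<lambda>n. f (2 * n))"] f(2) finite_subset by blast
qed

section \<open>Almost invariant sets\<close>

context group
begin

lemma almost_invariant_carrier: "almost_invariant G A \<Longrightarrow> A \<subseteq> carrier G"
  unfolding almost_invariant_def by simp

lemma almost_invariantD:
  "almost_invariant G A \<Longrightarrow> g \<in> carrier G \<Longrightarrow> finite (A - (A #> g)) \<and> finite ((A #> g) - A)"
  unfolding almost_invariant_def by simp

lemma mem_r_coset_inv_iff:
  assumes "A \<subseteq> carrier G" "x \<in> carrier G" "w \<in> carrier G"
  shows "x \<in> A #> inv w \<longleftrightarrow> x \<otimes> w \<in> A"
proof
  assume "x \<in> A #> inv w"
  then obtain a where "a \<in> A" "x = a \<otimes> inv w"
    unfolding r_coset_def by blast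
  then show "x \<otimes> w \<in> A"
    using assms by (auto simp: m_assoc)
next
  assume "x \<otimes> w \<in> A"
  moreover have "x = (x \<otimes> w) \<otimes> inv w"
    using assms by (simp add: m_assoc)
  ultimately show "x \<in> A #> inv w"
    unfolding r_coset_def by blast
qed

lemma l_coset_image: "g <# X = (\<lambda>x. g \<otimes> x) ` X"
  unfolding l_coset_def by auto

lemma finite_r_coset: "finite X \<Longrightarrow> finite (X #> g)"
  unfolding r_coset_def by simp

lemma almost_invariant_l_coset:
  assumes X: "almost_invariant G X" and g: "g \<in> carrier G"
  shows "almost_invariant G (g <# X)"
  unfolding almost_invariant_def
proof (intro conjI ballI)
  have Xc: "X \<subseteq> carrier G"
    using X by (rule almost_invariant_carrier)
  then show "g <# X \<subseteq> carrier G"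
    using g by (rule l_coset_subset_G)
  fix h assume h: "h \<in> carrier G"
  have "(g <# X) #> h = g <# (X #> h)"
    using coset_assoc[OF g h Xc] by simp
  then have "((g <# X) - ((g <# X) #> h)) \<union> (((g <# X) #> h) - (g <# X))
      \<subseteq> g <# ((X - (X #> h)) \<union> ((X #> h) - X))"
    unfolding l_coset_image by blast
  moreover have "finite (g <# ((X - (X #> h)) \<union> ((X #> h) - X)))"
    using almost_invariantD[OF X h] unfolding l_coset_image by simp
  ultimately show "finite (((g <# X) - ((g <# X) #> h)) \<union> (((g <# X) #> h) - (g <# X)))"
    by (rule finite_subset)
qed

lemma almost_invariant_Diff:
  assumes A: "almost_invariant G A" and B: "almost_invariant G B"
  shows "almost_invariant G (A - B)"
  unfolding almost_invariant_def
proof (intro conjI ballI)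
  show "A - B \<subseteq> carrier G"
    using almost_invariant_carrier[OF A] by blast
  fix h assume h: "h \<in> carrier G"
  have "(A - B) #> h = (A #> h) - (B #> h)"
    using almost_invariant_carrier[OF A] almost_invariant_carrier[OF B] h
    unfolding r_coset_def by (auto simp: subset_iff)
  then have "((A - B) - ((A - B) #> h)) \<union> (((A - B) #> h) - (A - B))
      \<subseteq> (A - (A #> h)) \<union> ((A #> h) - A) \<union> (B - (B #> h)) \<union> ((B #> h) - B)"
    by blast
  then show "finite (((A - B) - ((A - B) #> h)) \<union> (((A - B) #> h) - (A - B)))"
    using almost_invariantD[OF A h] almost_invariantD[OF B h] by (auto intro: finite_subset)
qed

lemma ends_family_split:
  assumes A: "ends_family G A N" and i: "i < N" and Y: "Y \<subseteq> A i" "almost_invariant G Y"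
    and infinite: "infinite Y" "infinite (A i - Y)"
  shows "ends_family G (A(i := Y, N := A i - Y)) (Suc N)"
proof -
  define B where "B = A(i := Y, N := A i - Y)"
  have "almost_invariant G (A i)" "infinite (A i)"
    using A i unfolding ends_family_def by auto
  then have members: "almost_invariant G (B k) \<and> infinite (B k)" if "k < Suc N" for k
    using A that Y infinite almost_invariant_Diff unfolding ends_family_def B_def by auto
  define parent where "parent k = (if k = N then i else k)" for k
  have parent: "B k \<subseteq> A (parent k)" "parent k < N" if "k < Suc N" for k
    using that i Y unfolding B_def parent_def by auto
  have "B k \<inter> B l = {}" if k: "k < Suc N" and l: "l < Suc N" and "k \<noteq> l" for k l
  proof (cases "parent k = parent l")
    case True
    with \<open>k \<noteq> l\<close> have "{k, l} = {i, N}"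
      using i unfolding parent_def by (auto split: if_splits)
    then show ?thesis
      using i unfolding B_def by (auto simp: doubleton_eq_iff)
  next
    case False
    then show ?thesis
      using A parent[OF k] parent[OF l] unfolding ends_family_def by blast
  qed
  with members show ?thesis
    unfolding ends_family_def B_def by blast
qed

lemma almost_invariant_if_closed:
  assumes U: "U \<subseteq> carrier G"
    and closed: "\<And>x y. E x y \<Longrightarrow> x \<in> U \<Longrightarrow> y \<in> U"
    and right_mult_edge: "\<And>h. h \<in> carrier G \<Longrightarrow> finite {x \<in> carrier G. \<not> E x (x \<otimes> h)}"
  shows "almost_invariant G U"
  unfolding almost_invariant_def
proof (intro conjI ballI U)
  fix h assume h: "h \<in> carrier G"
  have "U - (U #> h) \<subseteq> {x \<in> carrier G. \<not> E x (x \<otimes> inv h)}"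
  proof (intro subsetI CollectI conjI)
    fix y assume y: "y \<in> U - (U #> h)"
    then show "y \<in> carrier G"
      using U by blast
    show "\<not> E y (y \<otimes> inv h)"
      using y U h closed[of y "y \<otimes> inv h"] mem_r_coset_inv_iff[of U y "inv h"]
      by (auto simp: inv_inv subset_iff)
  qed
  moreover have "(U #> h) - U \<subseteq> {x \<in> carrier G. \<not> E x (x \<otimes> h)} #> h"
    using U closed unfolding r_coset_def by blast
  ultimately show "finite ((U - (U #> h)) \<union> ((U #> h) - U))"
    using right_mult_edge h by (meson finite_Un finite_r_coset finite_subset inv_closed)
qed

lemma finite_boundary:
  assumes A: "almost_invariant G A" and W: "finite W" "W \<subseteq> carrier G"
  shows "finite {x \<in> carrier G. \<exists>w\<in>W. x \<otimes> w \<in> A \<longleftrightarrow> x \<notin> A}"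
proof (rule finite_subset)
  show "{x \<in> carrier G. \<exists>w\<in>W. x \<otimes> w \<in> A \<longleftrightarrow> x \<notin> A}
      \<subseteq> (\<Union>w\<in>W. (A - (A #> inv w)) \<union> ((A #> inv w) - A))"
    using mem_r_coset_inv_iff almost_invariant_carrier[OF A] W by blast
  show "finite (\<Union>w\<in>W. (A - (A #> inv w)) \<union> ((A #> inv w) - A))"
    using W almost_invariantD[OF A] by (simp add: subset_iff)
qed

end

section \<open>Proper length functions\<close>

locale proper_length = group G for G (structure) +
  fixes len :: "'a \<Rightarrow> nat"
  assumes len_inv: "x \<in> carrier G \<Longrightarrow> len (inv x) = len x"
    and len_mult: "x \<in> carrier G \<Longrightarrow> y \<in> carrier G \<Longrightarrow> len (x \<otimes> y) \<le> len x + len y"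
    and finite_len_le: "finite {x \<in> carrier G. len x \<le> n}"
    and len_eq_0: "x \<in> carrier G \<Longrightarrow> len x = 0 \<Longrightarrow> x = \<one>"

context group
begin

definition word_prod :: "'a list \<Rightarrow> 'a" where
  "word_prod xs = foldr (\<otimes>) xs \<one>"

lemma word_prod_closed: "set xs \<subseteq> carrier G \<Longrightarrow> word_prod xs \<in> carrier G"
  by (induction xs) (auto simp: word_prod_def)

lemma word_prod_append:
  "set xs \<subseteq> carrier G \<Longrightarrow> set ys \<subseteq> carrier G \<Longrightarrow> word_prod (xs @ ys) = word_prod xs \<otimes> word_prod ys"
  by (induction xs) (auto simp: word_prod_def m_assoc word_prod_closed[unfolded word_prod_def])

lemma inv_word_prod:
  "set xs \<subseteq> carrier G \<Longrightarrow> inv (word_prod xs) = word_prod (rev (map (\<lambda>x. inv x) xs))"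
proof (induction xs)
  case Nil
  then show ?case by (simp add: word_prod_def)
next
  case (Cons x xs)
  then have "inv (word_prod (x # xs)) = word_prod (rev (map (\<lambda>x. inv x) xs)) \<otimes> word_prod [inv x]"
    by (simp add: word_prod_def inv_mult_group word_prod_closed[unfolded word_prod_def])
  also have "\<dots> = word_prod (rev (map (\<lambda>x. inv x) (x # xs)))"
  proof -
    have "set (rev (map (\<lambda>x. inv x) xs)) \<subseteq> carrier G"
      using Cons.prems by auto
    then show ?thesis
      using word_prod_append[of _ "[inv x]"] Cons.prems by simp
  qed
  finally show ?case .
qed

text \<open>Using only the first \<open>n\<close> enumerated elements keeps each ball finite, while every element
  still lies in some ball.\<close>

definition enum_gens :: "nat \<Rightarrow> 'a set" where
  "enum_gens n = from_nat_into (carrier G) ` {..n} \<union> (\<lambda>x. inv x) ` from_nat_into (carrier G) ` {..n}"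

definition word_ball :: "nat \<Rightarrow> 'a set" where
  "word_ball n = word_prod ` {xs. set xs \<subseteq> enum_gens n \<and> length xs \<le> n}"

definition word_length :: "'a \<Rightarrow> nat" where
  "word_length x = (LEAST n. x \<in> word_ball n)"

lemma from_nat_into_carrier: "from_nat_into (carrier G) k \<in> carrier G"
proof (rule from_nat_into)
  show "carrier G \<noteq> {}"
    using one_closed by blast
qed

lemma enum_gens_carrier: "enum_gens n \<subseteq> carrier G"
  unfolding enum_gens_def using from_nat_into_carrier by auto

lemma finite_word_ball: "finite (word_ball n)"
proof -
  have "finite (enum_gens n)"
    unfolding enum_gens_def by simp
  then show ?thesis
    unfolding word_ball_def by (intro finite_imageI finite_lists_length_le)
qed

lemma word_ball_mono:
  assumes "m \<le> n"
  shows "word_ball m \<subseteq> word_ball n"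
proof -
  have "enum_gens m \<subseteq> enum_gens n"
    using assms unfolding enum_gens_def by auto
  then show ?thesis
    using assms unfolding word_ball_def by (intro image_mono) auto
qed

lemma word_ball_mult:
  assumes "x \<in> word_ball m" "y \<in> word_ball n"
  shows "x \<otimes> y \<in> word_ball (m + n)"
proof -
  obtain xs ys where xs: "set xs \<subseteq> enum_gens m" "length xs \<le> m" "x = word_prod xs"
    and ys: "set ys \<subseteq> enum_gens n" "length ys \<le> n" "y = word_prod ys"
    using assms unfolding word_ball_def by blast
  have "enum_gens m \<union> enum_gens n \<subseteq> enum_gens (m + n)"
    unfolding enum_gens_def by auto
  then have "set (xs @ ys) \<subseteq> enum_gens (m + n)" "length (xs @ ys) \<le> m + n"
    using xs ys by auto
  moreover have "set xs \<subseteq> carrier G" "set ys \<subseteq> carrier G"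
    using xs ys enum_gens_carrier by blast+
  then have "x \<otimes> y = word_prod (xs @ ys)"
    using xs ys word_prod_append by simp
  ultimately show ?thesis
    unfolding word_ball_def by blast
qed

lemma word_ball_inv:
  assumes "x \<in> word_ball n"
  shows "inv x \<in> word_ball n"
proof -
  obtain xs where xs: "set xs \<subseteq> enum_gens n" "length xs \<le> n" "x = word_prod xs"
    using assms unfolding word_ball_def by blast
  have "(\<lambda>x. inv x) ` enum_gens n \<subseteq> enum_gens n"
    using from_nat_into_carrier unfolding enum_gens_def by (auto simp: inv_inv)
  then have "set (rev (map (\<lambda>x. inv x) xs)) \<subseteq> enum_gens n"
    using xs by auto
  moreover have "inv x = word_prod (rev (map (\<lambda>x. inv x) xs))"
    using xs enum_gens_carrier inv_word_prod[of xs] by blast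
  ultimately show ?thesis
    unfolding word_ball_def using xs(2) by (intro image_eqI) auto
qed

lemma word_ball_0: "word_ball 0 = {\<one>}"
  unfolding word_ball_def by (auto simp: word_prod_def)

lemma mem_word_ball_iff:
  assumes "countable (carrier G)" and x: "x \<in> carrier G"
  shows "x \<in> word_ball n \<longleftrightarrow> word_length x \<le> n"
proof -
  obtain k where k: "from_nat_into (carrier G) k = x"
    using from_nat_into_surj[OF assms] by blast
  then have "x \<in> enum_gens k" and "word_prod [x] = x"
    using x unfolding enum_gens_def word_prod_def by auto
  then have "x \<in> word_ball (Suc k)"
    unfolding word_ball_def by (intro image_eqI[of _ _ "[x]"]) (auto simp: enum_gens_def)
  then have "x \<in> word_ball (word_length x)"
    unfolding word_length_def by (rule LeastI)
  then show ?thesis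
    using word_ball_mono Least_le[of "\<lambda>n. x \<in> word_ball n"] unfolding word_length_def by blast
qed

lemma proper_length_word_length:
  assumes countable: "countable (carrier G)"
  shows "proper_length G word_length"
proof
  note ball_iff = mem_word_ball_iff[OF countable]
  have inv_le: "word_length (inv z) \<le> word_length z" if z: "z \<in> carrier G" for z
  proof -
    have "inv z \<in> word_ball (word_length z)"
      using word_ball_inv ball_iff[OF z] by simp
    then show ?thesis
      using ball_iff[of "inv z"] z by simp
  qed
  fix x y assume x: "x \<in> carrier G"
  show "word_length (inv x) = word_length x"
    using inv_le[OF x] inv_le[of "inv x"] x by (simp add: inv_inv)
  show "word_length x = 0 \<Longrightarrow> x = \<one>"
    using ball_iff[OF x, of 0] word_ball_0 by simp
  assume y: "y \<in> carrier G"
  have "x \<otimes> y \<in> word_ball (word_length x + word_length y)"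
    using word_ball_mult ball_iff[OF x] ball_iff[OF y] by simp
  then show "word_length (x \<otimes> y) \<le> word_length x + word_length y"
    using ball_iff[of "x \<otimes> y"] x y by simp
next
  fix n
  have "{x \<in> carrier G. word_length x \<le> n} \<subseteq> word_ball n"
    using mem_word_ball_iff[OF countable] by auto
  then show "finite {x \<in> carrier G. word_length x \<le> n}"
    using finite_word_ball by (rule finite_subset)
qed

end

section \<open>Slowly growing scales and the adjacency graph\<close>

lemma exists_slow_scale:
  fixes M :: "nat \<Rightarrow> nat"
  obtains rho :: "nat \<Rightarrow> nat"
  where "mono rho" "\<And>t. rho t \<le> t" "\<And>n. \<exists>t. n \<le> rho t" "\<And>t. 0 < rho t \<Longrightarrow> M (rho t) < t"
proof
  define S where "S t = {n. n \<le> t \<and> (\<forall>k. 1 \<le> k \<and> k \<le> n \<longrightarrow> M k < t)}" for t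
  define rho where "rho t = Max (S t)" for t
  have finite_S: "finite (S t)" for t
    unfolding S_def by (rule finite_subset[of _ "{..t}"]) auto
  have "0 \<in> S t" for t
    unfolding S_def by simp
  then have rho_S: "rho t \<in> S t" and le_rho: "n \<in> S t \<Longrightarrow> n \<le> rho t" for n t
    unfolding rho_def using finite_S by (auto intro: Max_in)
  show "mono rho"
  proof
    fix t t' :: nat assume "t \<le> t'"
    then have "S t \<subseteq> S t'"
      unfolding S_def by auto
    then show "rho t \<le> rho t'"
      using rho_S le_rho by blast
  qed
  show "rho t \<le> t" for t
    using rho_S unfolding S_def by blast
  show "M (rho t) < t" if "0 < rho t" for t
    using rho_S that unfolding S_def by auto
  show "\<exists>t. n \<le> rho t" for n
  proof
    have "M k \<le> (\<Sum>k\<le>n. M k)" if "k \<le> n" for k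
      using that by (intro member_le_sum) auto
    then have "n \<in> S (Suc (n + (\<Sum>k\<le>n. M k)))"
      unfolding S_def by fastforce
    then show "n \<le> rho (Suc (n + (\<Sum>k\<le>n. M k)))"
      by (rule le_rho)
  qed
qed

context proper_length
begin

lemma len_le_mult_right:
  assumes "x \<in> carrier G" "y \<in> carrier G"
  shows "len x \<le> len (x \<otimes> y) + len y"
  using len_mult[of "x \<otimes> y" "inv y"] len_inv[of y] assms by (simp add: m_assoc)

lemma len_le_mult_left:
  assumes "x \<in> carrier G" "y \<in> carrier G"
  shows "len y \<le> len x + len (x \<otimes> y)"
  using len_mult[of "inv x" "x \<otimes> y"] len_inv[of x] assms by (simp add: m_assoc[symmetric])

lemma exists_adapted_scale:
  fixes N :: nat and A :: "nat \<Rightarrow> 'a set"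
  assumes A: "\<And>i. i < N \<Longrightarrow> almost_invariant G (A i)"
  obtains rho :: "nat \<Rightarrow> nat"
  where "mono rho" "\<And>t. rho t \<le> t" "\<And>n. \<exists>t. n \<le> rho t"
    "\<And>x w i. x \<in> carrier G \<Longrightarrow> w \<in> carrier G \<Longrightarrow> len w \<le> rho (len x) \<Longrightarrow> i < N \<Longrightarrow>
       x \<otimes> w \<in> A i \<longleftrightarrow> x \<in> A i"
proof -
  define ball where "ball n = {x \<in> carrier G. len x \<le> n}" for n
  define boundary where
    "boundary n = {x \<in> carrier G. \<exists>i<N. \<exists>w\<in>ball n. x \<otimes> w \<in> A i \<longleftrightarrow> x \<notin> A i}" for n
  have "finite (boundary n)" for n
  proof -
    have "finite (ball n)" "ball n \<subseteq> carrier G"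
      unfolding ball_def using finite_len_le by auto
    then have "finite (\<Union>i<N. {x \<in> carrier G. \<exists>w\<in>ball n. x \<otimes> w \<in> A i \<longleftrightarrow> x \<notin> A i})"
      using finite_boundary A by blast
    moreover have "boundary n = (\<Union>i<N. {x \<in> carrier G. \<exists>w\<in>ball n. x \<otimes> w \<in> A i \<longleftrightarrow> x \<notin> A i})"
      unfolding boundary_def by blast
    ultimately show ?thesis
      by simp
  qed
  define M where "M n = Max (insert 0 (len ` boundary n))" for n
  have boundary_len: "len x \<le> M n" if "x \<in> boundary n" for x n
    unfolding M_def using that \<open>finite (boundary n)\<close> by (intro Max_ge) auto
  obtain rho :: "nat \<Rightarrow> nat"
    where rho: "mono rho" "\<And>t. rho t \<le> t" "\<And>n. \<exists>t. n \<le> rho t"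
      and far: "\<And>t. 0 < rho t \<Longrightarrow> M (rho t) < t"
    using exists_slow_scale[of M] by blast
  show ?thesis
  proof (rule that[OF rho])
    fix x w i assume x: "x \<in> carrier G" and w: "w \<in> carrier G" and i: "i < N"
      and w_small: "len w \<le> rho (len x)"
    show "x \<otimes> w \<in> A i \<longleftrightarrow> x \<in> A i"
    proof (cases "rho (len x) = 0")
      case True
      then have "w = \<one>"
        using len_eq_0 w w_small by simp
      then show ?thesis
        using x by simp
    next
      case False
      then have "x \<notin> boundary (rho (len x))"
        using far[of "len x"] boundary_len by fastforce
      then show ?thesis
        using x w i w_small unfolding boundary_def ball_def by blast
    qed
  qed
qed

end

locale slow_scale = proper_length G len for G (structure) and len +
  fixes rho :: "nat \<Rightarrow> nat"
  assumes rho_mono: "mono rho"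
    and rho_le: "rho t \<le> t"
    and rho_unbounded: "\<exists>t. n \<le> rho t"
begin

text \<open>Halving and iterating \<open>rho\<close> in the admissible step size is what lets adjacency survive
  left translation (see \<open>edge_radius_add_le\<close>).\<close>

definition edge_radius :: "nat \<Rightarrow> nat" where
  "edge_radius u = rho (rho (u div 2))"

definition adjacent :: "'a \<Rightarrow> 'a \<Rightarrow> bool" where
  "adjacent x y \<longleftrightarrow> x \<in> carrier G \<and> y \<in> carrier G \<and>
     len (inv x \<otimes> y) \<le> edge_radius (min (len x) (len y))"

definition component :: "'a \<Rightarrow> 'a set" where
  "component z = {y. adjacent\<^sup>*\<^sup>* z y}"

lemma rho_monoD: "a \<le> b \<Longrightarrow> rho a \<le> rho b"
  using rho_mono by (rule monoD)

lemma edge_radius_mono: "a \<le> b \<Longrightarrow> edge_radius a \<le> edge_radius b"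
  unfolding edge_radius_def by (intro rho_monoD div_le_mono)

lemma edge_radius_le: "edge_radius u \<le> rho u"
  unfolding edge_radius_def using rho_le[of "u div 2"] by (intro rho_monoD) simp

lemma edge_radius_unbounded: "\<exists>u. n \<le> edge_radius u"
proof -
  obtain t where t: "n \<le> rho t"
    using rho_unbounded by blast
  obtain t' where "t \<le> rho t'"
    using rho_unbounded by blast
  then have "n \<le> edge_radius (2 * t')"
    using t rho_monoD unfolding edge_radius_def by fastforce
  then show ?thesis ..
qed

lemma edge_radius_add_le:
  assumes "rho t \<le> s"
  shows "edge_radius (t + s) \<le> rho s"
proof (cases "t \<le> s")
  case True
  then have "edge_radius (t + s) \<le> rho (rho s)"
    unfolding edge_radius_def by (intro rho_monoD) simp
  also have "\<dots> \<le> rho s"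
    using rho_le by (rule rho_monoD)
  finally show ?thesis .
next
  case False
  then have "edge_radius (t + s) \<le> rho (rho t)"
    unfolding edge_radius_def by (intro rho_monoD) simp
  also have "\<dots> \<le> rho s"
    using assms by (rule rho_monoD)
  finally show ?thesis .
qed

lemma adjacent_sym: "adjacent x y \<Longrightarrow> adjacent y x"
  unfolding adjacent_def using len_inv[of "inv x \<otimes> y"]
  by (auto simp: inv_mult_group inv_inv min.commute)

lemma finite_not_adjacent_right_mult:
  assumes h: "h \<in> carrier G"
  shows "finite {x \<in> carrier G. \<not> adjacent x (x \<otimes> h)}"
proof -
  obtain T where T: "len h \<le> edge_radius T"
    using edge_radius_unbounded by blast
  have "adjacent x (x \<otimes> h)" if x: "x \<in> carrier G" and far: "T + len h < len x" for x
  proof -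
    have "T \<le> min (len x) (len (x \<otimes> h))"
      using far len_le_mult_right[OF x h] by linarith
    then have "len h \<le> edge_radius (min (len x) (len (x \<otimes> h)))"
      using T edge_radius_mono by (meson order.trans)
    then show ?thesis
      unfolding adjacent_def using x h by (simp add: m_assoc[symmetric])
  qed
  then have "{x \<in> carrier G. \<not> adjacent x (x \<otimes> h)} \<subseteq> {x \<in> carrier G. len x \<le> T + len h}"
    by force
  then show ?thesis
    using finite_len_le by (rule finite_subset)
qed

lemma almost_invariant_if_adjacent_closed:
  "U \<subseteq> carrier G \<Longrightarrow> (\<And>x y. adjacent x y \<Longrightarrow> x \<in> U \<Longrightarrow> y \<in> U) \<Longrightarrow> almost_invariant G U"
  using almost_invariant_if_closed finite_not_adjacent_right_mult by blast

lemma component_self [simp]: "z \<in> component z"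
  unfolding component_def by simp

lemma component_closed: "adjacent x y \<Longrightarrow> x \<in> component z \<Longrightarrow> y \<in> component z"
  unfolding component_def by (simp add: rtranclp.rtrancl_into_rtrancl)

lemma component_carrier:
  assumes "z \<in> carrier G"
  shows "component z \<subseteq> carrier G"
proof
  fix y assume "y \<in> component z"
  then have "adjacent\<^sup>*\<^sup>* z y"
    unfolding component_def by simp
  then show "y \<in> carrier G"
    by (induction rule: rtranclp_induct) (use assms adjacent_def in auto)
qed

lemma component_eq:
  assumes "y \<in> component z"
  shows "component y = component z"
proof -
  have zy: "adjacent\<^sup>*\<^sup>* z y"
    using assms unfolding component_def by simp
  then have "adjacent\<^sup>*\<^sup>* y z"
    by (induction rule: rtranclp_induct)
      (auto intro: converse_rtranclp_into_rtranclp adjacent_sym)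
  with zy show ?thesis
    unfolding component_def by (auto intro: rtranclp_trans)
qed

lemma almost_invariant_component: "z \<in> carrier G \<Longrightarrow> almost_invariant G (component z)"
  by (intro almost_invariant_if_adjacent_closed component_carrier) (auto intro: component_closed)

end

section \<open>Maximal families of ends\<close>

locale maximal_ends_family = slow_scale G len rho for G (structure) and len rho +
  fixes N :: nat and A :: "nat \<Rightarrow> 'a set"
  assumes family: "ends_family G A N"
    and maximal: "\<not> ends_family G B (Suc N)"
    and scale_respects: "x \<in> carrier G \<Longrightarrow> w \<in> carrier G \<Longrightarrow> len w \<le> rho (len x) \<Longrightarrow> i < N \<Longrightarrow>
       x \<otimes> w \<in> A i \<longleftrightarrow> x \<in> A i"
begin

lemma A_almost_invariant: "i < N \<Longrightarrow> almost_invariant G (A i)"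
  and A_infinite: "i < N \<Longrightarrow> infinite (A i)"
  and A_disjoint: "i < N \<Longrightarrow> j < N \<Longrightarrow> i \<noteq> j \<Longrightarrow> A i \<inter> A j = {}"
  using family unfolding ends_family_def by auto

lemma A_carrier: "i < N \<Longrightarrow> A i \<subseteq> carrier G"
  using A_almost_invariant almost_invariant_carrier by blast

lemma almost_invariant_subset_finite_or_cofinite:
  assumes "i < N" "Y \<subseteq> A i" "almost_invariant G Y"
  shows "finite Y \<or> finite (A i - Y)"
  using ends_family_split[OF family assms] maximal by blast

lemma adjacent_mem_iff:
  assumes xy: "adjacent x y" and i: "i < N"
  shows "y \<in> A i \<longleftrightarrow> x \<in> A i"
proof -
  have x: "x \<in> carrier G" and y: "y \<in> carrier G"
    using xy unfolding adjacent_def by auto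
  have "len (inv x \<otimes> y) \<le> edge_radius (len x)"
    using xy edge_radius_mono[of "min (len x) (len y)" "len x"] unfolding adjacent_def by simp
  then have "x \<otimes> (inv x \<otimes> y) \<in> A i \<longleftrightarrow> x \<in> A i"
    using x y i edge_radius_le by (intro scale_respects) (auto intro: order.trans)
  then show ?thesis
    using x y by (simp add: m_assoc[symmetric])
qed

lemma component_subset:
  assumes "z \<in> A i" "i < N"
  shows "component z \<subseteq> A i"
proof
  fix y assume "y \<in> component z"
  then have "adjacent\<^sup>*\<^sup>* z y"
    unfolding component_def by simp
  then show "y \<in> A i"
    by (induction rule: rtranclp_induct) (use assms adjacent_mem_iff in blast)+
qed

text \<open>If all components inside \<open>A i\<close> were finite, distributing them into two infinite
  collections would split \<open>A i\<close> into two infinite almost invariant sets.\<close>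

lemma exists_infinite_component:
  assumes i: "i < N"
  shows "\<exists>z\<in>A i. infinite (component z)"
proof (rule ccontr)
  assume "\<not> ?thesis"
  then have finite_components: "finite (component z)" if "z \<in> A i" for z
    using that by blast
  define C where "C = component ` A i"
  have "infinite C"
  proof
    assume "finite C"
    then have "finite (\<Union>C)"
      using finite_components unfolding C_def by blast
    moreover have "A i = \<Union>C"
      unfolding C_def using component_subset[OF _ i] component_self by blast
    ultimately show False
      using A_infinite[OF i] by simp
  qed
  then obtain T where T: "T \<subseteq> C" "infinite T" "infinite (C - T)"
    by (rule infinite_split)
  define Y where "Y = {y \<in> A i. component y \<in> T}"
  have "T \<subseteq> component ` Y" "C - T \<subseteq> component ` (A i - Y)"
    using T(1) unfolding C_def Y_def by auto
  then have "infinite Y" "infinite (A i - Y)"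
    using T(2,3) finite_surj by metis+
  moreover have "almost_invariant G Y"
  proof (rule almost_invariant_if_adjacent_closed)
    show "Y \<subseteq> carrier G"
      using A_carrier[OF i] unfolding Y_def by blast
    show "y' \<in> Y" if adj: "adjacent y y'" and y: "y \<in> Y" for y y'
    proof -
      have "component y' = component y"
        using component_eq component_closed[OF adj component_self] by blast
      then show ?thesis
        using y adjacent_mem_iff[OF adj i] unfolding Y_def by simp
    qed
  qed
  ultimately show False
    using almost_invariant_subset_finite_or_cofinite[OF i, of Y] unfolding Y_def by blast
qed

text \<open>Every point \<open>x\<close> of the component has \<open>g \<otimes> x\<close> far from the origin (otherwise \<open>x\<close> and
  \<open>inv g\<close> would lie on the same side of \<open>A k\<close>), so each step of a path starting at \<open>z\<close> is
  small at the scale of \<open>g \<otimes> x\<close>.\<close>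

lemma l_coset_component_subset:
  assumes a: "a < N" "g \<in> A a" and k: "k < N" "inv g \<notin> A k"
    and z: "z \<in> A k" "len z \<le> rho (len g)"
  shows "g <# component z \<subseteq> A a"
proof -
  have g: "g \<in> carrier G" and zc: "z \<in> carrier G"
    using a k z A_carrier by blast+
  have "g \<otimes> y \<in> A a" if "adjacent\<^sup>*\<^sup>* z y" for y
    using that
  proof (induction rule: rtranclp_induct)
    case base
    show ?case
      using scale_respects[OF g zc z(2) a(1)] a(2) by simp
  next
    case (step x y)
    have x: "x \<in> carrier G" and y: "y \<in> carrier G"
      using step.hyps(2) unfolding adjacent_def by auto
    have "x \<in> A k"
      using component_subset[OF z(1) k(1)] step.hyps(1) unfolding component_def by blast
    have far: "rho (len g) \<le> len (g \<otimes> x)"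
    proof (rule ccontr)
      assume "\<not> ?thesis"
      then have "inv g \<otimes> (g \<otimes> x) \<in> A k \<longleftrightarrow> inv g \<in> A k"
        using g x k(1) len_inv[OF g] by (intro scale_respects) auto
      then show False
        using \<open>x \<in> A k\<close> k(2) g x by (simp add: m_assoc[symmetric])
    qed
    have "len (inv x \<otimes> y) \<le> edge_radius (len x)"
      using step.hyps(2) edge_radius_mono[of "min (len x) (len y)" "len x"]
      unfolding adjacent_def by simp
    also have "\<dots> \<le> edge_radius (len g + len (g \<otimes> x))"
      using len_le_mult_left[OF g x] by (rule edge_radius_mono)
    also have "\<dots> \<le> rho (len (g \<otimes> x))"
      using far by (rule edge_radius_add_le)
    finally have "(g \<otimes> x) \<otimes> (inv x \<otimes> y) \<in> A a \<longleftrightarrow> g \<otimes> x \<in> A a"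
      using g x y a(1) by (intro scale_respects) auto
    moreover have "(g \<otimes> x) \<otimes> (inv x \<otimes> y) = g \<otimes> y"
    proof -
      have "x \<otimes> (inv x \<otimes> y) = y"
        using x y by (simp add: m_assoc[symmetric])
      then show ?thesis
        using g x y by (simp add: m_assoc)
    qed
    ultimately show ?case
      using step.IH by simp
  qed
  then show ?thesis
    unfolding l_coset_image component_def by blast
qed

lemma cofinite_l_coset_component:
  assumes a: "a < N" "g \<in> A a" and k: "k < N" "inv g \<notin> A k"
    and z: "z \<in> A k" "len z \<le> rho (len g)" "infinite (component z)"
  shows "finite (A a - (g <# component z))"
proof -
  have g: "g \<in> carrier G" and zc: "z \<in> carrier G"
    using a k z A_carrier by blast+
  have "inj_on (\<lambda>x. g \<otimes> x) (component z)"
    using inj_on_cmult[OF g] component_carrier[OF zc] by (rule inj_on_subset)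
  then have "infinite (g <# component z)"
    using z(3) unfolding l_coset_image by (auto dest: finite_imageD)
  moreover have "almost_invariant G (g <# component z)"
    using almost_invariant_component[OF zc] g by (rule almost_invariant_l_coset)
  ultimately show ?thesis
    using almost_invariant_subset_finite_or_cofinite[OF a(1) l_coset_component_subset[OF assms(1-6)]]
    by blast
qed

lemma exists_two_avoiding:
  assumes "2 < N"
  obtains i j where "i < N" "j < N" "i \<noteq> j" "x \<notin> A i" "x \<notin> A j"
proof -
  have "A 0 \<inter> A 1 = {}" "A 0 \<inter> A 2 = {}" "A 1 \<inter> A 2 = {}"
    using A_disjoint assms by simp_all
  then consider "x \<notin> A 0" "x \<notin> A 1" | "x \<notin> A 0" "x \<notin> A 2" | "x \<notin> A 1" "x \<notin> A 2"
    by blast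
  then show ?thesis
    using that[of 0 1] that[of 0 2] that[of 1 2] assms by cases auto
qed

lemma disjoint_l_coset_components:
  assumes "i < N" "j < N" "i \<noteq> j" "y \<in> A i" "z \<in> A j" "g \<in> carrier G"
  shows "(g <# component y) \<inter> (g <# component z) = {}"
proof -
  have "component y \<inter> component z = {}"
    using component_subset[of y i] component_subset[of z j] A_disjoint[of i j] assms by blast
  moreover have "component y \<subseteq> carrier G" "component z \<subseteq> carrier G"
    using component_carrier A_carrier assms by blast+
  ultimately show ?thesis
    using inj_on_image_Int[OF inj_on_cmult[OF assms(6)], of "component y" "component z"]
    by (simp add: l_coset_image)
qed

lemma N_le_2: "N \<le> 2"
proof (rule ccontr)
  assume "\<not> N \<le> 2"
  then have N: "0 < N" "1 < N" "2 < N"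
    by auto
  obtain z where z: "\<And>i. i < N \<Longrightarrow> z i \<in> A i \<and> infinite (component (z i))"
    using exists_infinite_component by metis
  obtain T where T: "Max (len ` z ` {..<N}) \<le> rho T"
    using rho_unbounded by blast
  have "infinite (A 0 - {x \<in> carrier G. len x \<le> T})"
    using A_infinite[OF N(1)] finite_len_le by (rule Diff_infinite_finite[rotated])
  then obtain g where "g \<in> A 0 - {x \<in> carrier G. len x \<le> T}"
    using infinite_imp_nonempty by blast
  then have g: "g \<in> A 0" "g \<in> carrier G" "T < len g"
    using A_carrier[OF N(1)] by auto
  have z_short: "len (z i) \<le> rho (len g)" if "i < N" for i
  proof -
    have "len (z i) \<le> Max (len ` z ` {..<N})"
      using that by (intro Max_ge) auto
    also have "\<dots> \<le> rho (len g)"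
      using T rho_monoD[of T "len g"] g(3) by simp
    finally show ?thesis .
  qed
  obtain i j where ij: "i < N" "j < N" "i \<noteq> j" "inv g \<notin> A i" "inv g \<notin> A j"
    using exists_two_avoiding N(3) by blast
  define C where "C k = g <# component (z k)" for k
  have "finite (A 0 - C i)" "finite (A 0 - C j)"
    using cofinite_l_coset_component[OF N(1) g(1)] ij z z_short unfolding C_def by auto
  moreover have "C i \<inter> C j = {}"
    using disjoint_l_coset_components ij z g(2) unfolding C_def by blast
  then have "A 0 \<subseteq> (A 0 - C i) \<union> (A 0 - C j)"
    by blast
  ultimately have "finite (A 0)"
    by (meson finite_UnI finite_subset)
  then show False
    using A_infinite[OF N(1)] by simp
qed

end

lemma (in proper_length) maximal_ends_family_le_2:
  assumes "ends_family G A N" and "\<And>B. \<not> ends_family G B (Suc N)"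
  shows "N \<le> 2"
proof -
  obtain rho where "mono rho" "\<And>t. rho t \<le> t" "\<And>n. \<exists>t. n \<le> rho t"
    "\<And>x w i. x \<in> carrier G \<Longrightarrow> w \<in> carrier G \<Longrightarrow> len w \<le> rho (len x) \<Longrightarrow> i < N \<Longrightarrow>
       x \<otimes> w \<in> A i \<longleftrightarrow> x \<in> A i"
    using exists_adapted_scale[of N A] assms(1) unfolding ends_family_def by blast
  then interpret maximal_ends_family G len rho N A
    using assms by unfold_locales auto
  show ?thesis
    by (rule N_le_2)
qed

theorem theorem5p10:
  fixes G :: "('a, 'b) monoid_scheme"
  assumes "group G" and "countable (carrier G)"
  shows "num_ends G = \<infinity> \<or> num_ends G \<le> 2"
proof (rule ccontr)
  interpret group G by fact
  assume contra: "\<not> (num_ends G = \<infinity> \<or> num_ends G \<le> 2)"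
  then have "infinite (carrier G)"
    unfolding num_ends_def by auto
  obtain m where m: "num_ends G = enat m" "2 < m"
    using contra by (cases "num_ends G") (auto simp: numeral_eq_enat)
  obtain A where "ends_family G A m" and "\<And>B. \<not> ends_family G B (Suc m)"
    using num_ends_attained[OF \<open>infinite (carrier G)\<close> m(1)] by blast
  then have "m \<le> 2"
    by (rule proper_length.maximal_ends_family_le_2[OF proper_length_word_length[OF assms(2)]])
  with m(2) show False
    by simp
qed

end
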